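(* CAP has at most one solution.
   Context: Let $s:[0,B]\to[0,\infty)$ satisfy $s(0)=0$, be strictly increasing, strictly concave, differentiable, with $s'$ continuous on $[0,B]$ (so $s'>0$ is strictly decreasing). Fix $b\in(0,B]$, an integer $k\ge2$, and constants $c_1\ge c_2\ge\cdots\ge c_k>0$. The Constrained Allocation Problem (CAP) is: find $\theta_1,\dots,\theta_k\ge0$ such that (i) $\theta_1+\cdots+\theta_k=b$; (ii) $\theta_1\le\theta_2\le\cdots\le\theta_k$; (iii) $s'(\theta_j)/s'(\theta_i)=c_j/c_i$ whenever $i<j$ and $\theta_j\ge\theta_i>0$; (iv) $s'(\theta_j)/s'(0)\ge c_j/c_i$ whenever $i<j$ and $\theta_j>\theta_i=0$. *)

theory Defs
  imports "HOL-Analysis.Analysis"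
begin

definition strictly_concave_on :: "real set \<Rightarrow> (real \<Rightarrow> real) \<Rightarrow> bool" where
  "strictly_concave_on S f \<longleftrightarrow>
     (\<forall>x\<in>S. \<forall>y\<in>S. \<forall>t. x \<noteq> y \<and> 0 < t \<and> t < 1 \<longrightarrow>
        f ((1 - t) * x + t * y) > (1 - t) * f x + t * f y)"

text \<open>Solutions of the Constrained Allocation Problem, indices 1..k.
  The argument ds is the derivative s' of s.\<close>
definition CAP_solution ::
  "(real \<Rightarrow> real) \<Rightarrow> real \<Rightarrow> nat \<Rightarrow> (nat \<Rightarrow> real) \<Rightarrow> (nat \<Rightarrow> real) \<Rightarrow> bool" where
  "CAP_solution ds b k c \<theta> \<longleftrightarrow>
     (\<forall>i\<in>{1..k}. \<theta> i \<ge> 0) \<and>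
     (\<Sum>i=1..k. \<theta> i) = b \<and>
     (\<forall>i j. 1 \<le> i \<and> i \<le> j \<and> j \<le> k \<longrightarrow> \<theta> i \<le> \<theta> j) \<and>
     (\<forall>i j. 1 \<le> i \<and> i < j \<and> j \<le> k \<and> \<theta> j \<ge> \<theta> i \<and> \<theta> i > 0 \<longrightarrow>
        ds (\<theta> j) / ds (\<theta> i) = c j / c i) \<and>
     (\<forall>i j. 1 \<le> i \<and> i < j \<and> j \<le> k \<and> \<theta> j > \<theta> i \<and> \<theta> i = 0 \<longrightarrow>
        ds (\<theta> j) / ds 0 \<ge> c j / c i)"

end

theory Submission
  imports Defs
begin

text \<open>Conditions (iii) and (iv) say that a solution satisfies the Karush-Kuhn-Tucker
  conditions \<open>s' \<theta>\<^sub>i = \<mu> c\<^sub>i\<close> on its support and \<open>s' 0 \<le> \<mu> c\<^sub>i\<close> off it, with multiplier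
  \<open>\<mu> = s' \<theta>\<^sub>k / c\<^sub>k\<close>. Strict concavity makes \<open>s'\<close> strictly decreasing, so every \<open>\<theta>\<^sub>i\<close>
  is a decreasing function of \<open>\<mu>\<close>, strictly so where it is positive; as \<open>\<theta>\<^sub>k > 0\<close>, the total
  \<open>b\<close> determines \<open>\<mu>\<close> and hence \<open>\<theta>\<close>.\<close>

lemma strictly_concave_on_chord:
  assumes "strictly_concave_on S f" and "x \<in> S" and "y \<in> S"
    and "x < z \<and> z < y \<or> y < z \<and> z < x"
  shows "f z - f x > (z - x) / (y - x) * (f y - f x)"
proof -
  define t where "t = (z - x) / (y - x)"
  have t: "0 < t" "t < 1" "x \<noteq> y"
    using assms(4) by (auto simp: t_def field_simps)
  have "t * (y - x) = z - x"
    using t(3) by (simp add: t_def)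
  then have "z = (1 - t) * x + t * y"
    by (simp add: algebra_simps)
  then have "f z > (1 - t) * f x + t * f y"
    using assms(1-3) t unfolding strictly_concave_on_def by auto
  then have "f z - f x > t * (f y - f x)"
    by (simp add: algebra_simps)
  then show ?thesis
    by (simp add: t_def)
qed

lemma strictly_concave_on_tangent:
  assumes conc: "strictly_concave_on S f" and "convex S"
    and deriv: "(f has_real_derivative f') (at x within S)"
    and x: "x \<in> S" and y: "y \<in> S"
  shows "f y - f x \<le> f' * (y - x)"
proof -
  define slope where "slope = (\<lambda>z. (f z - f x) / (z - x))"
  have "{min x y..max x y} \<subseteq> S"
    using \<open>convex S\<close> x y unfolding is_interval_convex_1[symmetric] is_interval_1
    by (metis atLeastAtMost_iff max_def min_def subsetI)
  then have deriv': "(f has_real_derivative f') (at x within {min x y..max x y})"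
    by (rule DERIV_subset[OF deriv])
  consider "x < y" | "y < x" | "x = y" by linarith
  then show ?thesis
  proof cases
    case 1
    have "(slope \<longlongrightarrow> f') (at_right x)"
      using deriv' 1
      by (simp add: slope_def has_field_derivative_iff at_within_Icc_at_right)
    moreover have "\<forall>\<^sub>F z in at_right x. slope y \<le> slope z"
      unfolding eventually_at_right[OF 1]
    proof (intro exI[of _ y] conjI allI impI)
      fix z assume "x < z" "z < y"
      then show "slope y \<le> slope z"
        using strictly_concave_on_chord[OF conc x y, of z]
        by (simp add: slope_def field_simps)
    qed (fact 1)
    ultimately have "slope y \<le> f'"
      by (rule tendsto_lowerbound) simp
    then show ?thesis
      using 1 by (simp add: slope_def field_simps)
  next
    case 2
    have "(slope \<longlongrightarrow> f') (at_left x)"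
      using deriv' 2
      by (simp add: slope_def has_field_derivative_iff at_within_Icc_at_left)
    moreover have "\<forall>\<^sub>F z in at_left x. slope z \<le> slope y"
      unfolding eventually_at_left[OF 2]
    proof (intro exI[of _ y] conjI allI impI)
      fix z assume "y < z" "z < x"
      then show "slope z \<le> slope y"
        using strictly_concave_on_chord[OF conc x y, of z]
        by (simp add: slope_def field_simps)
    qed (fact 2)
    ultimately have "f' \<le> slope y"
      by (rule tendsto_upperbound) simp
    then show ?thesis
      using 2 by (simp add: slope_def field_simps)
  qed simp
qed

lemma strictly_concave_on_strict_tangent:
  assumes conc: "strictly_concave_on S f" and "convex S"
    and deriv: "(f has_real_derivative f') (at x within S)"
    and x: "x \<in> S" and y: "y \<in> S" and "x \<noteq> y"
  shows "f y - f x < f' * (y - x)"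
proof -
  define m where "m = (x + y) / 2"
  have m: "m \<in> S"
    using convexD[OF \<open>convex S\<close> x y, of "1/2" "1/2"] by (simp add: m_def field_simps)
  have "x < m \<and> m < y \<or> y < m \<and> m < x"
    using \<open>x \<noteq> y\<close> by (auto simp: m_def)
  then have "f m - f x > (m - x) / (y - x) * (f y - f x)"
    by (rule strictly_concave_on_chord[OF conc x y])
  also have "(m - x) / (y - x) = 1 / 2"
    using \<open>x \<noteq> y\<close> by (simp add: m_def field_simps)
  finally have "(f y - f x) / 2 < f m - f x"
    by simp
  also have "\<dots> \<le> f' * (m - x)"
    by (rule strictly_concave_on_tangent[OF conc \<open>convex S\<close> deriv x m])
  finally show ?thesis
    by (simp add: m_def field_simps)
qed

lemma strictly_concave_on_derivative_pos:
  assumes conc: "strictly_concave_on S f" and "convex S"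
    and deriv: "(f has_real_derivative f') (at x within S)"
    and x: "x \<in> S" and y: "y \<in> S" and "x < y" and "f x \<le> f y"
  shows "0 < f'"
proof -
  have "0 \<le> f y - f x"
    using \<open>f x \<le> f y\<close> by simp
  also have "\<dots> < f' * (y - x)"
    using strictly_concave_on_strict_tangent[OF conc \<open>convex S\<close> deriv x y] \<open>x < y\<close> by simp
  finally show ?thesis
    using \<open>x < y\<close> by (simp add: zero_less_mult_iff)
qed

lemma strictly_concave_on_derivative_strict_antimono:
  assumes conc: "strictly_concave_on S f" and "convex S"
    and deriv: "\<forall>x\<in>S. (f has_real_derivative f' x) (at x within S)"
  shows "strict_antimono_on S f'"
proof (rule monotone_onI)
  fix x y assume x: "x \<in> S" and y: "y \<in> S" and "x < y"
  have "f' y * (y - x) < f y - f x"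
    using strictly_concave_on_strict_tangent[OF conc \<open>convex S\<close> _ y x, of "f' y"] deriv y \<open>x < y\<close>
    by (simp add: algebra_simps)
  also have "\<dots> < f' x * (y - x)"
    using strictly_concave_on_strict_tangent[OF conc \<open>convex S\<close> _ x y, of "f' x"] deriv x \<open>x < y\<close>
    by simp
  finally show "f' y < f' x"
    using \<open>x < y\<close> by simp
qed

lemma strict_antimono_on_less_eq:
  fixes f :: "'a::linorder \<Rightarrow> 'b::linorder"
  assumes "strict_antimono_on S f" and "x \<in> S" and "y \<in> S"
  shows "f x \<le> f y \<longleftrightarrow> y \<le> x"
  using assms monotone_onD[OF assms(1), of x y] monotone_onD[OF assms(1), of y x]
  by (cases x y rule: linorder_cases) auto

lemma strict_antimono_on_less:
  fixes f :: "'a::linorder \<Rightarrow> 'b::linorder"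
  assumes "strict_antimono_on S f" and "x \<in> S" and "y \<in> S"
  shows "f x < f y \<longleftrightarrow> y < x"
  using strict_antimono_on_less_eq[OF assms(1) assms(3,2)] by auto

definition kkt_allocation ::
  "(real \<Rightarrow> real) \<Rightarrow> (nat \<Rightarrow> real) \<Rightarrow> nat \<Rightarrow> real \<Rightarrow> (nat \<Rightarrow> real) \<Rightarrow> bool" where
  "kkt_allocation d c k \<mu> \<theta> \<longleftrightarrow>
     (\<forall>i\<in>{1..k}. 0 \<le> \<theta> i \<and> d (\<theta> i) \<le> \<mu> * c i \<and> (0 < \<theta> i \<longrightarrow> d (\<theta> i) = \<mu> * c i))"

lemma CAP_solution_range:
  assumes "CAP_solution d b k c \<theta>"
  shows "\<theta> ` {1..k} \<subseteq> {0..b}"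
proof (rule image_subsetI)
  fix i assume i: "i \<in> {1..k}"
  have nonneg: "\<forall>i\<in>{1..k}. 0 \<le> \<theta> i" and total: "(\<Sum>i=1..k. \<theta> i) = b"
    using assms unfolding CAP_solution_def by blast+
  have "\<theta> i \<le> (\<Sum>i=1..k. \<theta> i)"
    using i nonneg by (intro member_le_sum) auto
  then show "\<theta> i \<in> {0..b}"
    using i nonneg total by auto
qed

lemma CAP_solution_last_pos:
  assumes "CAP_solution d b k c \<theta>" and "0 < b"
  shows "0 < \<theta> k"
proof (rule ccontr)
  assume "\<not> 0 < \<theta> k"
  have "\<theta> i = 0" if "i \<in> {1..k}" for i
  proof -
    have "0 \<le> \<theta> i" "\<theta> i \<le> \<theta> k"
      using assms(1) that unfolding CAP_solution_def by auto
    with \<open>\<not> 0 < \<theta> k\<close> show ?thesis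
      by linarith
  qed
  then have "(\<Sum>i=1..k. \<theta> i) = 0"
    by simp
  with assms show False
    unfolding CAP_solution_def by simp
qed

lemma CAP_solution_kkt_allocation:
  assumes sol: "CAP_solution d b k c \<theta>" and "0 < b"
    and c_pos: "\<forall>i\<in>{1..k}. 0 < c i" and "0 < d 0"
  shows "kkt_allocation d c k (d (\<theta> k) / c k) \<theta>"
  unfolding kkt_allocation_def
proof (intro ballI conjI impI)
  fix i assume i: "i \<in> {1..k}"
  have ci: "0 < c i" and ck: "0 < c k"
    using c_pos i by auto
  have \<theta>k: "0 < \<theta> k"
    using CAP_solution_last_pos[OF sol \<open>0 < b\<close>] .
  have \<theta>i: "0 \<le> \<theta> i" "\<theta> i \<le> \<theta> k"
    using sol i unfolding CAP_solution_def by auto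
  show "0 \<le> \<theta> i"
    by (fact \<theta>i(1))
  have support: "d (\<theta> i) = d (\<theta> k) / c k * c i" if "0 < \<theta> i"
  proof (cases "i = k")
    case False
    then have ratio: "d (\<theta> k) / d (\<theta> i) = c k / c i"
      using sol i \<theta>i that unfolding CAP_solution_def by auto
    moreover have "d (\<theta> i) \<noteq> 0"
      using ratio ci ck by auto
    ultimately show ?thesis
      using ci ck by (simp add: field_simps)
  qed (use ck in simp)
  then show "0 < \<theta> i \<Longrightarrow> d (\<theta> i) = d (\<theta> k) / c k * c i" .
  show "d (\<theta> i) \<le> d (\<theta> k) / c k * c i"
  proof (cases "0 < \<theta> i")
    case False
    then have "\<theta> i = 0" "i \<noteq> k"
      using \<theta>i \<theta>k by auto
    then have "c k / c i \<le> d (\<theta> k) / d 0"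
      using sol i \<theta>k unfolding CAP_solution_def by auto
    with \<open>\<theta> i = 0\<close> show ?thesis
      using ci ck \<open>0 < d 0\<close> by (simp add: field_simps)
  qed (simp add: support)
qed

lemma kkt_allocation_antimono:
  assumes dec: "strict_antimono_on S d" and c_pos: "\<forall>i\<in>{1..k}. 0 < c i"
    and \<theta>: "kkt_allocation d c k \<mu> \<theta>" and \<eta>: "kkt_allocation d c k \<nu> \<eta>"
    and "\<mu> \<le> \<nu>" and i: "i \<in> {1..k}" and "\<theta> i \<in> S" and "\<eta> i \<in> S"
  shows "\<eta> i \<le> \<theta> i"
proof (cases "0 < \<eta> i")
  case True
  have "d (\<theta> i) \<le> \<mu> * c i"
    using \<theta> i unfolding kkt_allocation_def by blast
  also have "\<dots> \<le> \<nu> * c i"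
    using \<open>\<mu> \<le> \<nu>\<close> c_pos i by simp
  also have "\<dots> = d (\<eta> i)"
    using \<eta> i True unfolding kkt_allocation_def by simp
  finally show ?thesis
    using strict_antimono_on_less_eq[OF dec \<open>\<theta> i \<in> S\<close> \<open>\<eta> i \<in> S\<close>] by simp
next
  case False
  then show ?thesis
    using \<theta> i unfolding kkt_allocation_def by force
qed

lemma kkt_allocation_strict_antimono:
  assumes dec: "strict_antimono_on S d" and c_pos: "\<forall>i\<in>{1..k}. 0 < c i"
    and \<theta>: "kkt_allocation d c k \<mu> \<theta>" and \<eta>: "kkt_allocation d c k \<nu> \<eta>"
    and "\<mu> < \<nu>" and i: "i \<in> {1..k}" and "\<theta> i \<in> S" and "\<eta> i \<in> S" and "0 < \<eta> i"
  shows "\<eta> i < \<theta> i"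
proof -
  have "d (\<theta> i) \<le> \<mu> * c i"
    using \<theta> i unfolding kkt_allocation_def by blast
  also have "\<dots> < \<nu> * c i"
    using \<open>\<mu> < \<nu>\<close> c_pos i by simp
  also have "\<dots> = d (\<eta> i)"
    using \<eta> i \<open>0 < \<eta> i\<close> unfolding kkt_allocation_def by simp
  finally show ?thesis
    using strict_antimono_on_less[OF dec \<open>\<theta> i \<in> S\<close> \<open>\<eta> i \<in> S\<close>] by simp
qed

lemma kkt_allocation_sum_strict_antimono:
  assumes dec: "strict_antimono_on S d" and c_pos: "\<forall>i\<in>{1..k}. 0 < c i"
    and \<theta>: "kkt_allocation d c k \<mu> \<theta>" and \<eta>: "kkt_allocation d c k \<nu> \<eta>"
    and "\<theta> ` {1..k} \<subseteq> S" and "\<eta> ` {1..k} \<subseteq> S" and "\<mu> < \<nu>" and "1 \<le> k" and "0 < \<eta> k"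
  shows "(\<Sum>i=1..k. \<eta> i) < (\<Sum>i=1..k. \<theta> i)"
proof (rule sum_strict_mono_ex1)
  show "\<forall>i\<in>{1..k}. \<eta> i \<le> \<theta> i"
    using kkt_allocation_antimono[OF dec c_pos \<theta> \<eta>] assms(5-7) by (simp add: image_subset_iff)
  have "k \<in> {1..k}"
    using \<open>1 \<le> k\<close> by simp
  then show "\<exists>i\<in>{1..k}. \<eta> i < \<theta> i"
    using kkt_allocation_strict_antimono[OF dec c_pos \<theta> \<eta> \<open>\<mu> < \<nu>\<close>] assms(5,6,9) by blast
qed simp

lemma kkt_allocation_unique:
  assumes dec: "strict_antimono_on S d" and c_pos: "\<forall>i\<in>{1..k}. 0 < c i"
    and \<theta>: "kkt_allocation d c k \<mu> \<theta>" and \<eta>: "kkt_allocation d c k \<nu> \<eta>"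
    and "\<theta> ` {1..k} \<subseteq> S" and "\<eta> ` {1..k} \<subseteq> S" and "1 \<le> k" and "0 < \<theta> k" and "0 < \<eta> k"
    and same_total: "(\<Sum>i=1..k. \<theta> i) = (\<Sum>i=1..k. \<eta> i)"
  shows "\<forall>i\<in>{1..k}. \<theta> i = \<eta> i"
proof -
  have "\<mu> = \<nu>"
  proof (rule ccontr)
    assume "\<mu> \<noteq> \<nu>"
    then consider "\<mu> < \<nu>" | "\<nu> < \<mu>"
      by linarith
    then show False
    proof cases
      case 1
      from kkt_allocation_sum_strict_antimono[OF dec c_pos \<theta> \<eta> assms(5,6) 1 assms(7,9)]
      show False using same_total by simp
    next
      case 2
      from kkt_allocation_sum_strict_antimono[OF dec c_pos \<eta> \<theta> assms(6,5) 2 assms(7,8)]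
      show False using same_total by simp
    qed
  qed
  show ?thesis
  proof
    fix i assume i: "i \<in> {1..k}"
    then have "\<theta> i \<in> S" "\<eta> i \<in> S"
      using assms(5,6) by auto
    then have "\<eta> i \<le> \<theta> i" "\<theta> i \<le> \<eta> i"
      using kkt_allocation_antimono[OF dec c_pos \<theta> \<eta> _ i] kkt_allocation_antimono[OF dec c_pos \<eta> \<theta> _ i]
        \<open>\<mu> = \<nu>\<close> by auto
    then show "\<theta> i = \<eta> i"
      by simp
  qed
qed

theorem proposition3:
  fixes s ds :: "real \<Rightarrow> real" and B b :: real and k :: nat and c :: "nat \<Rightarrow> real"
  assumes "0 < B"
    and "\<forall>x\<in>{0..B}. s x \<ge> 0"
    and "s 0 = 0"
    and "strict_mono_on {0..B} s"
    and "strictly_concave_on {0..B} s"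
    and "\<forall>x\<in>{0..B}. (s has_real_derivative ds x) (at x within {0..B})"
    and "continuous_on {0..B} ds"
    and "0 < b" and "b \<le> B"
    and "2 \<le> k"
    and "\<forall>i j. 1 \<le> i \<and> i \<le> j \<and> j \<le> k \<longrightarrow> c j \<le> c i"
    and "\<forall>i\<in>{1..k}. c i > 0"
    and "CAP_solution ds b k c \<theta>"
    and "CAP_solution ds b k c \<eta>"
  shows "\<forall>i\<in>{1..k}. \<theta> i = \<eta> i"
proof -
  have dec: "strict_antimono_on {0..B} ds"
    using strictly_concave_on_derivative_strict_antimono assms(5,6) by blast
  have ends: "0 \<in> {0..B}" "B \<in> {0..B}"
    using assms(1) by auto
  have ds0: "0 < ds 0"
    using strictly_concave_on_derivative_pos[OF assms(5) convex_real_interval(5) _ ends assms(1)]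
      assms(2,3,6) ends by simp
  have range: "\<theta> ` {1..k} \<subseteq> {0..B}" "\<eta> ` {1..k} \<subseteq> {0..B}"
    using CAP_solution_range[OF assms(13)] CAP_solution_range[OF assms(14)] assms(9) by force+
  show ?thesis
  proof (rule kkt_allocation_unique[OF dec assms(12) _ _ range])
    show "kkt_allocation ds c k (ds (\<theta> k) / c k) \<theta>" "kkt_allocation ds c k (ds (\<eta> k) / c k) \<eta>"
      using CAP_solution_kkt_allocation assms(8,12-14) ds0 by blast+
    show "0 < \<theta> k" "0 < \<eta> k"
      using CAP_solution_last_pos assms(8,13,14) by blast+
    show "(\<Sum>i=1..k. \<theta> i) = (\<Sum>i=1..k. \<eta> i)"
      using assms(13,14) unfolding CAP_solution_def by simp
  qed (use assms(10) in simp)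
qed

end
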